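(* Let $p\ge4$ and let $\vec r:\mathbb{Z}\to\mathbb{R}^3$ be a discrete centroaffine space curve which is closed with period $p$ and has $\tau_k=0$ for all $k$. Let $S$ be the $p\times p$ real matrix whose $n$-th row ($n=1,\dots,p$) has entry $\kappa_n$ in column $n-1$, entry $-\kappa_n-\bar\kappa_n$ in column $n$, entry $1+\bar\kappa_n$ in column $n+1$, entry $-1$ in column $n+2$ (column indices taken modulo $p$ in $\{1,\dots,p\}$), and zeros elsewhere. Then $\operatorname{rank}S=p-3$.
   Context: A discrete centroaffine space curve is a map $\vec r:\mathbb{Z}\to\mathbb{R}^3$ with $[\vec r_{k-1},\vec r_k,\vec r_{k+1}]\ne0$ for all $k$, where $\vec r_k=\vec r(k)$, $[\cdot,\cdot,\cdot]$ is the $3\times3$ determinant and $\vec t_k=\vec r_{k+1}-\vec r_k$. With $D_k=[\vec r_{k-1},\vec r_k,\vec r_{k+1}]$: $\kappa_k=\frac{[\vec r_k,\vec r_{k+1},\vec r_{k+2}]}{D_k}$, $\bar\kappa_k=\frac{[\vec r_{k+1},\vec t_{k-1},\vec t_{k+1}]}{D_k}$, $\tau_k=\frac{[\vec t_{k-1},\vec t_k,\vec t_{k+1}]}{D_k}$. Closed with period $p$: $\vec r(k+p)=\vec r(k)$ for all $k$, $p$ minimal. *)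

theory Defs
  imports "HOL-Analysis.Analysis" "Jordan_Normal_Form.DL_Rank"
begin

definition det3 :: "real^3 \<Rightarrow> real^3 \<Rightarrow> real^3 \<Rightarrow> real" where
  "det3 a b c = Determinants.det (vector [a, b, c] :: real^3^3)"

definition tvec :: "(int \<Rightarrow> real^3) \<Rightarrow> int \<Rightarrow> real^3" where
  "tvec r k = r (k + 1) - r k"

definition Dk :: "(int \<Rightarrow> real^3) \<Rightarrow> int \<Rightarrow> real" where
  "Dk r k = det3 (r (k - 1)) (r k) (r (k + 1))"

definition centroaffine_curve :: "(int \<Rightarrow> real^3) \<Rightarrow> bool" where
  "centroaffine_curve r \<longleftrightarrow> (\<forall>k. Dk r k \<noteq> 0)"

definition kappa :: "(int \<Rightarrow> real^3) \<Rightarrow> int \<Rightarrow> real" where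
  "kappa r k = det3 (r k) (r (k + 1)) (r (k + 2)) / Dk r k"

definition kappabar :: "(int \<Rightarrow> real^3) \<Rightarrow> int \<Rightarrow> real" where
  "kappabar r k = det3 (r (k + 1)) (tvec r (k - 1)) (tvec r (k + 1)) / Dk r k"

definition tau :: "(int \<Rightarrow> real^3) \<Rightarrow> int \<Rightarrow> real" where
  "tau r k = det3 (tvec r (k - 1)) (tvec r k) (tvec r (k + 1)) / Dk r k"

definition closed_with_period :: "(int \<Rightarrow> real^3) \<Rightarrow> nat \<Rightarrow> bool" where
  "closed_with_period r p \<longleftrightarrow> p > 0 \<and> (\<forall>k. r (k + int p) = r k) \<and>
     (\<forall>q::nat. 0 < q \<and> q < p \<longrightarrow> \<not> (\<forall>k. r (k + int q) = r k))"

text \<open>The p x p matrix S, 0-based: row i corresponds to row n = i+1 of the paper,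
  column j to column j+1; column indices modulo p.\<close>
definition S_mat :: "(int \<Rightarrow> real^3) \<Rightarrow> nat \<Rightarrow> real mat" where
  "S_mat r p = mat p p (\<lambda>(i, j).
     (let n = int i + 1 in
      if j = (i + p - 1) mod p then kappa r n
      else if j = i then - kappa r n - kappabar r n
      else if j = (i + 1) mod p then 1 + kappabar r n
      else if j = (i + 2) mod p then -1
      else 0))"

end

theory Submission
  imports Defs "Jordan_Normal_Form.DL_Rank_Submatrix"
begin

unbundle no vec_syntax \<comment> \<open>\<open>$\<close> is reserved for Jordan_Normal_Form vectors\<close>

text \<open>Row \<open>n\<close> of \<open>S\<close> encodes the relation
  \<open>\<kappa>\<^sub>n r\<^sub>n\<^sub>-\<^sub>1 - (\<kappa>\<^sub>n + \<kappa>'\<^sub>n) r\<^sub>n + (1 + \<kappa>'\<^sub>n) r\<^sub>n\<^sub>+\<^sub>1 - r\<^sub>n\<^sub>+\<^sub>2 = 0\<close>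
  (with \<open>\<kappa>' = kappabar\<close>), which is Cramer's rule for the four vectors
  \<open>r\<^sub>n\<^sub>-\<^sub>1, \<dots>, r\<^sub>n\<^sub>+\<^sub>2\<close> once \<open>\<tau>\<^sub>n = 0\<close>. Hence the kernel of \<open>S\<close> contains
  \<open>(\<ell>(r\<^sub>1), \<dots>, \<ell>(r\<^sub>p))\<close> for every linear functional \<open>\<ell>\<close>. The three coordinate
  functionals of the basis \<open>r\<^sub>1, r\<^sub>2, r\<^sub>3\<close> give kernel vectors starting with the unit
  vectors, so the first three columns of \<open>S\<close> lie in the span of the others and
  \<open>rank S \<le> p - 3\<close>. Conversely the minor on rows \<open>1..p-3\<close> and columns \<open>3..p-1\<close> is
  triangular with diagonal \<open>-1\<close>.\<close>

lemma pick_atLeastLessThan: "i < b - a \<Longrightarrow> pick {a..<b} i = a + i"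
proof (induction i)
  case 0
  then show ?case by (auto intro!: Least_equality)
next
  case (Suc i)
  then show ?case by (auto intro!: Least_equality)
qed

lemma sum_atLeastLessThan_zero_prefix:
  fixes g :: "nat \<Rightarrow> 'a::comm_monoid_add"
  assumes "\<And>j. j < k \<Longrightarrow> g j = 0" and "k \<le> n"
  shows "(\<Sum>j\<in>{0..<n}. g j) = (\<Sum>j\<in>{0..<n - k}. g (j + k))"
proof -
  have "(\<Sum>j\<in>{0..<n}. g j) = (\<Sum>j\<in>{0..<k}. g j) + (\<Sum>j\<in>{k..<n}. g j)"
    using assms(2) by (simp add: sum.atLeastLessThan_concat)
  also have "(\<Sum>j\<in>{k..<n}. g j) = (\<Sum>j\<in>{0..<n - k}. g (j + k))"
    using sum.shift_bounds_nat_ivl[of g 0 k "n - k"] assms(2) by simp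
  finally show ?thesis
    using assms(1) by simp
qed

lemma sum_four_points:
  fixes f :: "nat \<Rightarrow> 'a::semiring_0"
  assumes "distinct [c1, c2, c3, c4]" and "{c1, c2, c3, c4} \<subseteq> A" and "finite A"
  shows "(\<Sum>j\<in>A. (if j = c1 then a1 else if j = c2 then a2 else if j = c3 then a3
            else if j = c4 then a4 else 0) * f j)
    = a1 * f c1 + a2 * f c2 + a3 * f c3 + a4 * f c4"
proof -
  have "(\<Sum>j\<in>A. (if j = c1 then a1 else if j = c2 then a2 else if j = c3 then a3
            else if j = c4 then a4 else 0) * f j)
    = (\<Sum>j\<in>A. (if j = c1 then a1 * f c1 else 0) + (if j = c2 then a2 * f c2 else 0)
        + (if j = c3 then a3 * f c3 else 0) + (if j = c4 then a4 * f c4 else 0))"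
    by (rule sum.cong) (use assms(1) in auto)
  also have "\<dots> = a1 * f c1 + a2 * f c2 + a3 * f c3 + a4 * f c4"
    using assms(2,3) by (simp add: sum.distrib)
  finally show ?thesis .
qed

lemma (in vec_space) rank_ge_of_triangular_minor:
  assumes A: "A \<in> carrier_mat n nc" and "m \<le> n" and "k + m \<le> nc"
    and upper: "\<And>i j. i < j \<Longrightarrow> j < m \<Longrightarrow> A $$ (i, j + k) = 0"
    and diag: "\<And>i. i < m \<Longrightarrow> A $$ (i, i + k) \<noteq> 0"
  shows "m \<le> rank A"
proof -
  define M where "M = submatrix A {0..<m} {k..<k + m}"
  have rows: "card {i. i < dim_row A \<and> i \<in> {0..<m}} = m"
  proof -
    have "{i. i < dim_row A \<and> i \<in> {0..<m}} = {0..<m}"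
      using A \<open>m \<le> n\<close> by auto
    then show ?thesis by simp
  qed
  have cols: "card {j. j < dim_col A \<and> j \<in> {k..<k + m}} = m"
  proof -
    have "{j. j < dim_col A \<and> j \<in> {k..<k + m}} = {k..<k + m}"
      using A \<open>k + m \<le> nc\<close> by auto
    then show ?thesis by simp
  qed
  have M: "M \<in> carrier_mat m m"
    unfolding M_def by (intro carrier_matI) (simp_all only: dim_submatrix rows cols)
  have M_entry: "M $$ (i, j) = A $$ (i, j + k)" if "i < m" "j < m" for i j
  proof -
    have "M $$ (i, j) = A $$ (pick {0..<m} i, pick {k..<k + m} j)"
      unfolding M_def by (rule submatrix_index) (simp_all only: rows cols that)
    then show ?thesis
      using that pick_atLeastLessThan[of i m 0] pick_atLeastLessThan[of j "k + m" k]
      by (simp add: add.commute)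
  qed
  have "det M = prod_list (diag_mat M)"
    by (rule det_lower_triangular[OF _ M]) (simp add: M_entry upper)
  moreover have "0 \<notin> set (diag_mat M)"
    using M diag by (auto simp: diag_mat_def M_entry)
  ultimately have "det M \<noteq> 0"
    by simp
  then show ?thesis
    using rank_gt_minor[OF A, of "{0..<m}" "{k..<k + m}"] cols A by (simp add: M_def)
qed

text \<open>If the kernel contains \<open>k\<close> vectors whose first \<open>k\<close> entries form the identity, then every
  \<open>A x\<close> equals \<open>A u\<close> for some \<open>u\<close> vanishing on the first \<open>k\<close> entries, so the last \<open>nc - k\<close> columns
  already span the column space.\<close>
lemma (in vec_space) rank_le_of_unit_prefix_kernel:
  fixes z :: "nat \<Rightarrow> 'a vec"
  assumes A: "A \<in> carrier_mat n nc" and "k \<le> nc"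
    and z_carrier: "\<And>a. a < k \<Longrightarrow> z a \<in> carrier_vec nc"
    and z_kernel: "\<And>a. a < k \<Longrightarrow> A *\<^sub>v z a = 0\<^sub>v n"
    and z_prefix: "\<And>a b. a < k \<Longrightarrow> b < k \<Longrightarrow> z a $ b = (if a = b then 1 else 0)"
  shows "rank A \<le> nc - k"
proof -
  define B where "B = mat n (nc - k) (\<lambda>(i, j). A $$ (i, j + k))"
  have B: "B \<in> carrier_mat n (nc - k)"
    by (simp add: B_def)
  have drop_prefix: "A *\<^sub>v x = B *\<^sub>v vec (nc - k) (\<lambda>j. x $ (j + k))"
    if x: "x \<in> carrier_vec nc" and x0: "\<And>j. j < k \<Longrightarrow> x $ j = 0" for x
  proof (rule eq_vecI)
    fix i
    assume "i < dim_vec (B *\<^sub>v vec (nc - k) (\<lambda>j. x $ (j + k)))"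
    then have i: "i < n" using B by simp
    have "(A *\<^sub>v x) $ i = (\<Sum>j\<in>{0..<nc}. A $$ (i, j) * x $ j)"
      using A x i by (simp add: scalar_prod_def)
    also have "\<dots> = (\<Sum>j\<in>{0..<nc - k}. A $$ (i, j + k) * x $ (j + k))"
      by (rule sum_atLeastLessThan_zero_prefix) (simp_all add: x0 \<open>k \<le> nc\<close>)
    also have "\<dots> = (B *\<^sub>v vec (nc - k) (\<lambda>j. x $ (j + k))) $ i"
      using i by (simp add: B_def scalar_prod_def)
    finally show "(A *\<^sub>v x) $ i = (B *\<^sub>v vec (nc - k) (\<lambda>j. x $ (j + k))) $ i" .
  qed (use A B in simp)
  have clear_prefix: "\<exists>u\<in>carrier_vec nc. (\<forall>j<k. u $ j = 0) \<and> A *\<^sub>v u = A *\<^sub>v x"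
    if x: "x \<in> carrier_vec nc" for x
  proof -
    define u where "u = vec nc (\<lambda>j. x $ j - (\<Sum>a<k. x $ a * z a $ j))"
    have "u $ b = 0" if b: "b < k" for b
    proof -
      have "(\<Sum>a<k. x $ a * z a $ b) = (\<Sum>a<k. if a = b then x $ a else 0)"
        by (rule sum.cong) (simp_all add: z_prefix b)
      then show ?thesis
        using b \<open>k \<le> nc\<close> by (simp add: u_def)
    qed
    moreover have "A *\<^sub>v u = A *\<^sub>v x"
    proof (rule eq_vecI)
      fix i
      assume "i < dim_vec (A *\<^sub>v x)"
      then have i: "i < n" using A by simp
      have z_row: "(\<Sum>j\<in>{0..<nc}. A $$ (i, j) * z a $ j) = 0" if "a < k" for a
        using arg_cong[OF z_kernel[OF that], of "\<lambda>v. v $ i"] A i z_carrier[OF that]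
        by (simp add: scalar_prod_def)
      have swap: "(\<Sum>j\<in>{0..<nc}. \<Sum>a<k. x $ a * (A $$ (i, j) * z a $ j))
          = (\<Sum>a<k. \<Sum>j\<in>{0..<nc}. x $ a * (A $$ (i, j) * z a $ j))"
        by (rule sum.swap)
      have "(A *\<^sub>v u) $ i = (\<Sum>j\<in>{0..<nc}. A $$ (i, j) * x $ j)
          - (\<Sum>a<k. x $ a * (\<Sum>j\<in>{0..<nc}. A $$ (i, j) * z a $ j))"
        using A i
        by (simp add: u_def scalar_prod_def right_diff_distrib sum_subtractf sum_distrib_left
            mult.left_commute swap)
      also have "\<dots> = (A *\<^sub>v x) $ i"
        using A i x z_row by (simp add: scalar_prod_def)
      finally show "(A *\<^sub>v u) $ i = (A *\<^sub>v x) $ i" .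
    qed (simp add: u_def)
    ultimately show ?thesis
      by (intro bexI[of _ u]) (simp_all add: u_def)
  qed
  have "col_space A = col_space B"
  proof -
    have "(\<exists>x\<in>carrier_vec nc. A *\<^sub>v x = y) \<longleftrightarrow> (\<exists>v\<in>carrier_vec (nc - k). B *\<^sub>v v = y)" for y
    proof
      assume "\<exists>x\<in>carrier_vec nc. A *\<^sub>v x = y"
      then obtain u where "u \<in> carrier_vec nc" "\<forall>j<k. u $ j = 0" "A *\<^sub>v u = y"
        using clear_prefix by metis
      then show "\<exists>v\<in>carrier_vec (nc - k). B *\<^sub>v v = y"
        using drop_prefix by (intro bexI[of _ "vec (nc - k) (\<lambda>j. u $ (j + k))"]) auto
    next
      assume "\<exists>v\<in>carrier_vec (nc - k). B *\<^sub>v v = y"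
      then obtain v where v: "v \<in> carrier_vec (nc - k)" "B *\<^sub>v v = y"
        by blast
      define x where "x = vec nc (\<lambda>j. if j < k then 0 else v $ (j - k))"
      have "vec (nc - k) (\<lambda>j. x $ (j + k)) = v"
        using v(1) by (auto simp: x_def)
      moreover have "A *\<^sub>v x = B *\<^sub>v vec (nc - k) (\<lambda>j. x $ (j + k))"
        by (rule drop_prefix) (use \<open>k \<le> nc\<close> in \<open>auto simp: x_def\<close>)
      ultimately have "A *\<^sub>v x = y"
        using v(2) by simp
      then show "\<exists>x\<in>carrier_vec nc. A *\<^sub>v x = y"
        by (auto simp: x_def)
    qed
    then show ?thesis
      using A B by (simp add: col_space_eq[OF A] col_space_eq[OF B])
  qed
  then have "rank A = rank B"
    by (simp add: rank_def col_space_def)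
  also have "\<dots> \<le> nc - k"
    by (rule rank_le_nc[OF B])
  finally show ?thesis .
qed

lemma det3_expand:
  "det3 a b c = vec_nth a 1 * vec_nth b 2 * vec_nth c 3 + vec_nth a 2 * vec_nth b 3 * vec_nth c 1
    + vec_nth a 3 * vec_nth b 1 * vec_nth c 2 - vec_nth a 1 * vec_nth b 3 * vec_nth c 2
    - vec_nth a 2 * vec_nth b 1 * vec_nth c 3 - vec_nth a 3 * vec_nth b 2 * vec_nth c 1"
  unfolding det3_def det_3 vector_3 ..

lemma det3_cyclic: "det3 b c a = det3 a b c"
  unfolding det3_expand by (simp add: algebra_simps)

lemma det3_eq_0_if_eq:
  shows det3_eq_0_12: "det3 a a c = 0" and det3_eq_0_13: "det3 a b a = 0"
    and det3_eq_0_23: "det3 a b b = 0"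
  unfolding det3_expand by (simp_all add: algebra_simps)

lemma linear_det3_left: "linear (\<lambda>v. det3 v b c / d)"
proof (rule linearI)
  show "det3 (u + v) b c / d = det3 u b c / d + det3 v b c / d" for u v
  proof -
    have "det3 (u + v) b c = det3 u b c + det3 v b c"
      by (simp add: det3_expand algebra_simps)
    then show ?thesis
      by (simp add: add_divide_distrib)
  qed
  show "det3 (t *\<^sub>R u) b c / d = t *\<^sub>R (det3 u b c / d)" for t u
  proof -
    have "det3 (t *\<^sub>R u) b c = t * det3 u b c"
      by (simp add: det3_expand algebra_simps)
    then show ?thesis
      by simp
  qed
qed

lemma det3_cramer:
  "det3 b c d *\<^sub>R a - det3 a c d *\<^sub>R b + det3 a b d *\<^sub>R c - det3 a b c *\<^sub>R d = 0"
  by (simp add: Finite_Cartesian_Product.vec_eq_iff forall_3 det3_expand algebra_simps)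

lemma tau_zero_recurrence:
  assumes D: "Dk r k \<noteq> 0" and tau: "tau r k = 0"
  shows "kappa r k *\<^sub>R r (k - 1) - (kappa r k + kappabar r k) *\<^sub>R r k
      + (1 + kappabar r k) *\<^sub>R r (k + 1) - r (k + 2) = 0"
proof -
  define a b c d where "a = r (k - 1)" and "b = r k" and "c = r (k + 1)" and "d = r (k + 2)"
  have Dk: "Dk r k = det3 a b c"
    by (simp add: Dk_def a_def b_def c_def)
  have kappa: "kappa r k = det3 b c d / det3 a b c"
    by (simp add: kappa_def Dk b_def c_def d_def add.assoc)
  have "det3 (r (k + 1)) (tvec r (k - 1)) (tvec r (k + 1)) = det3 c (b - a) (d - c)"
    by (simp add: tvec_def a_def b_def c_def d_def add.assoc)
  then have kappabar: "kappabar r k = (det3 a c d - det3 b c d) / det3 a b c"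
    by (simp add: kappabar_def Dk det3_expand algebra_simps)
  have "det3 (tvec r (k - 1)) (tvec r k) (tvec r (k + 1)) = det3 (b - a) (c - b) (d - c)"
    by (simp add: tvec_def a_def b_def c_def d_def add.assoc)
  then have tau_numerator: "det3 a b d = det3 a b c + det3 a c d - det3 b c d"
    using tau D by (simp add: tau_def Dk det3_expand algebra_simps)
  have kappa_scaled: "det3 a b c * kappa r k = det3 b c d"
    and kappabar_scaled: "det3 a b c * kappabar r k = det3 a c d - det3 b c d"
    using D by (simp_all add: Dk kappa kappabar)
  have "det3 a b c *\<^sub>R (kappa r k *\<^sub>R a - (kappa r k + kappabar r k) *\<^sub>R b
      + (1 + kappabar r k) *\<^sub>R c - d)
    = (det3 a b c * kappa r k) *\<^sub>R a - (det3 a b c * kappa r k + det3 a b c * kappabar r k) *\<^sub>R b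
      + (det3 a b c + det3 a b c * kappabar r k) *\<^sub>R c - det3 a b c *\<^sub>R d"
    by (simp add: algebra_simps)
  also have "\<dots> = det3 b c d *\<^sub>R a - det3 a c d *\<^sub>R b + det3 a b d *\<^sub>R c - det3 a b c *\<^sub>R d"
    unfolding kappa_scaled kappabar_scaled tau_numerator by (simp add: algebra_simps)
  also have "\<dots> = 0"
    by (rule det3_cramer)
  finally show ?thesis
    using D by (simp add: Dk a_def b_def c_def d_def)
qed

lemma periodic_mod:
  fixes x :: "int \<Rightarrow> 'a"
  assumes "\<And>k. x (k + int p) = x k"
  shows "x (int (m mod p) + 1) = x (int m + 1)"
proof -
  have multiple: "x (k + int p * int q) = x k" for k q
  proof (induction q)
    case (Suc q)
    have "k + int p * int (Suc q) = (k + int p * int q) + int p"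
      by (simp add: algebra_simps)
    then show ?case
      by (metis Suc.IH assms)
  qed simp
  have "int m + 1 = (int (m mod p) + 1) + int p * int (m div p)"
    by (simp flip: of_nat_mult of_nat_add)
  then show ?thesis
    using multiple by metis
qed

lemma cyclic_neighbours:
  assumes "i < (p::nat)" and "2 \<le> p"
  shows "(i + p - 1) mod p = (if i = 0 then p - 1 else i - 1)"
    and "(i + 1) mod p = (if i + 1 < p then i + 1 else 0)"
    and "(i + 2) mod p = (if i + 2 < p then i + 2 else i + 2 - p)"
proof -
  show "(i + p - 1) mod p = (if i = 0 then p - 1 else i - 1)"
  proof (cases "i = 0")
    case False
    then have "i + p - 1 = (i - 1) + p" by simp
    then have "(i + p - 1) mod p = (i - 1) mod p" by (metis mod_add_self2)
    then show ?thesis using False assms by simp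
  qed (use assms in simp)
  show "(i + 1) mod p = (if i + 1 < p then i + 1 else 0)"
  proof (cases "i + 1 < p")
    case False
    then have "i + 1 = p" using assms by simp
    then show ?thesis by simp
  qed simp
  show "(i + 2) mod p = (if i + 2 < p then i + 2 else i + 2 - p)"
  proof (cases "i + 2 < p")
    case False
    then have "i + 2 = (i + 2 - p) + p" by simp
    then have "(i + 2) mod p = (i + 2 - p) mod p" by (metis mod_add_self2)
    then show ?thesis using False assms by simp
  qed simp
qed

lemma distinct_cyclic_neighbours:
  fixes i p :: nat
  assumes "i < p" and "4 \<le> p"
  shows "distinct [(i + p - 1) mod p, i, (i + 1) mod p, (i + 2) mod p]"
  using cyclic_neighbours[OF assms(1)] assms by auto

lemma S_mat_entry:
  assumes "i < p" and "j < p"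
  shows "S_mat r p $$ (i, j) =
    (if j = (i + p - 1) mod p then kappa r (int i + 1)
     else if j = i then - kappa r (int i + 1) - kappabar r (int i + 1)
     else if j = (i + 1) mod p then 1 + kappabar r (int i + 1)
     else if j = (i + 2) mod p then -1
     else 0)"
  using assms by (simp add: S_mat_def Let_def)

lemma S_mat_carrier: "S_mat r p \<in> carrier_mat p p"
  by (simp add: S_mat_def)

lemma rank_S_mat_ge:
  assumes "4 \<le> p"
  shows "p - 3 \<le> vec_space.rank p (S_mat r p)"
proof (rule vec_space.rank_ge_of_triangular_minor[OF S_mat_carrier, where k = 2])
  fix i j
  assume "i < j" "j < p - 3"
  moreover have "i < p" "2 \<le> p"
    using calculation assms by simp_all
  ultimately show "S_mat r p $$ (i, j + 2) = 0"
    using cyclic_neighbours[of i p] by (auto simp: S_mat_entry)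
next
  fix i
  assume "i < p - 3"
  moreover have "i < p" "2 \<le> p"
    using calculation assms by simp_all
  ultimately show "S_mat r p $$ (i, i + 2) \<noteq> 0"
    using cyclic_neighbours[of i p] by (simp add: S_mat_entry)
qed (use assms in simp_all)

lemma S_mat_mult_periodic_solution:
  fixes x :: "int \<Rightarrow> real"
  assumes "4 \<le> p" and periodic: "\<And>k. x (k + int p) = x k"
    and recurrence: "\<And>n. kappa r n * x (n - 1) - (kappa r n + kappabar r n) * x n
      + (1 + kappabar r n) * x (n + 1) - x (n + 2) = 0"
  shows "S_mat r p *\<^sub>v vec p (\<lambda>j. x (int j + 1)) = 0\<^sub>v p"
proof (rule eq_vecI)
  fix i
  assume "i < dim_vec (0\<^sub>v p :: real vec)"
  then have i: "i < p" by simp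
  define n where "n = int i + 1"
  define c1 c3 c4 where "c1 = (i + p - 1) mod p" and "c3 = (i + 1) mod p" and "c4 = (i + 2) mod p"
  have x_at: "x (int c1 + 1) = x (n - 1)" "x (int c3 + 1) = x (n + 1)" "x (int c4 + 1) = x (n + 2)"
    using periodic_mod[of x p, OF periodic] periodic[of "n - 1"] i
    by (simp_all add: c1_def c3_def c4_def n_def algebra_simps)
  have "(S_mat r p *\<^sub>v vec p (\<lambda>j. x (int j + 1))) $ i
      = (\<Sum>j\<in>{0..<p}. S_mat r p $$ (i, j) * x (int j + 1))"
    using i S_mat_carrier[of r p] by (simp add: scalar_prod_def)
  also have "\<dots> = (\<Sum>j\<in>{0..<p}. (if j = c1 then kappa r n else if j = i then - kappa r n - kappabar r n
      else if j = c3 then 1 + kappabar r n else if j = c4 then -1 else 0) * x (int j + 1))"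
    by (rule sum.cong) (simp_all add: S_mat_entry i c1_def c3_def c4_def n_def)
  also have "\<dots> = kappa r n * x (int c1 + 1) + (- kappa r n - kappabar r n) * x (int i + 1)
      + (1 + kappabar r n) * x (int c3 + 1) + (-1) * x (int c4 + 1)"
    using distinct_cyclic_neighbours[OF i assms(1)] i
    by (intro sum_four_points) (auto simp: c1_def c3_def c4_def)
  also have "\<dots> = kappa r n * x (n - 1) - (kappa r n + kappabar r n) * x n
      + (1 + kappabar r n) * x (n + 1) - x (n + 2)"
    unfolding x_at by (simp add: n_def algebra_simps)
  finally show "(S_mat r p *\<^sub>v vec p (\<lambda>j. x (int j + 1))) $ i = (0\<^sub>v p :: real vec) $ i"
    using i recurrence by simp
qed (simp add: S_mat_def)

lemma S_mat_mult_linear_image: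
  fixes l :: "real^3 \<Rightarrow> real"
  assumes "4 \<le> p" and curve: "centroaffine_curve r" and "\<And>k. r (k + int p) = r k"
    and tau: "\<And>k. tau r k = 0" and "linear l"
  shows "S_mat r p *\<^sub>v vec p (\<lambda>j. l (r (int j + 1))) = 0\<^sub>v p"
proof (rule S_mat_mult_periodic_solution)
  show "kappa r n * l (r (n - 1)) - (kappa r n + kappabar r n) * l (r n)
      + (1 + kappabar r n) * l (r (n + 1)) - l (r (n + 2)) = 0" for n
    using arg_cong[OF tau_zero_recurrence[of r n], of l] curve tau \<open>linear l\<close>
    by (simp add: centroaffine_curve_def linear_diff linear_add linear_scale linear_0)
qed (simp_all add: assms)

lemma rank_S_mat_le:
  assumes "4 \<le> p" and curve: "centroaffine_curve r" and "\<And>k. r (k + int p) = r k"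
    and "\<And>k. tau r k = 0"
  shows "vec_space.rank p (S_mat r p) \<le> p - 3"
proof -
  define D where "D = det3 (r 1) (r 2) (r 3)"
  have "D \<noteq> 0"
    using curve[unfolded centroaffine_curve_def, rule_format, of 2] by (simp add: Dk_def D_def)
  \<comment> \<open>the coordinates of \<open>v\<close> in the basis \<open>r 1, r 2, r 3\<close>, by Cramer's rule\<close>
  define coord where "coord a v =
    [det3 v (r 2) (r 3), det3 v (r 3) (r 1), det3 v (r 1) (r 2)] ! a / D" for a v
  define z where "z a = vec p (\<lambda>j. coord a (r (int j + 1)))" for a
  show ?thesis
  proof (rule vec_space.rank_le_of_unit_prefix_kernel[OF S_mat_carrier, where z = z])
    fix a :: nat
    assume "a < 3"
    then have "a = 0 \<or> a = 1 \<or> a = 2"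
      by auto
    then have "linear (coord a)"
      by (auto simp: coord_def[abs_def] linear_det3_left)
    then show "S_mat r p *\<^sub>v z a = 0\<^sub>v p"
      unfolding z_def using assms by (intro S_mat_mult_linear_image)
  next
    fix a b :: nat
    assume "a < 3" "b < 3"
    then have "a \<in> {0, 1, 2}" "b \<in> {0, 1, 2}"
      by auto
    then show "z a $ b = (if a = b then 1 else 0)"
      using assms(1) \<open>D \<noteq> 0\<close>
      by (auto simp: z_def coord_def D_def det3_eq_0_12 det3_eq_0_13 det3_eq_0_23
          det3_cyclic[of "r 2" "r 3" "r 1"] det3_cyclic[of "r 3" "r 1" "r 2"])
  qed (use assms(1) in \<open>simp_all add: z_def\<close>)
qed

theorem proposition6p5:
  fixes r :: "int \<Rightarrow> real^3" and p :: nat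
  assumes "p \<ge> 4"
    and "centroaffine_curve r"
    and "closed_with_period r p"
    and "\<forall>k. tau r k = 0"
  shows "vec_space.rank p (S_mat r p) = p - 3"
proof (rule antisym)
  show "vec_space.rank p (S_mat r p) \<le> p - 3"
    using assms by (intro rank_S_mat_le) (simp_all add: closed_with_period_def)
  show "p - 3 \<le> vec_space.rank p (S_mat r p)"
    using assms(1) by (rule rank_S_mat_ge)
qed

end
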